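(* Let $n\geq1$ and $k\in\{1,\ldots,n\}$, and let $\eta_k\in\Omega$ be the sequence constructed below. Then $v_{n,\eta_k}=(0,k)$ or $v_{n,\eta_k}=(n-k+1,0)$.
   Context: $\Omega$ is the set of sequences $\eta=(z,d_0,\ldots,d_r)$ with $z\in\{0,1\}$, $d_0=0$, $d_i\geq1$ ($1\leq i\leq r$), $\sum d_i=n$. For $j\in\{1,\ldots,n\}$ let $t$ be unique with $\sum_{i=0}^{t-1}d_i<j\leq\sum_{i=0}^td_i$, $c=j-\sum_{i=0}^{t-1}d_i$; $v_{j,\eta}=(\sum_{i\text{ odd},i<t}d_i+c,0)$ if $z=1,t$ odd; $(0,\sum_{i\text{ even},i<t}d_i+c)$ if $z=1,t$ even; $(0,\sum_{i\text{ odd},i<t}d_i+c)$ if $z=0,t$ odd; $(\sum_{i\text{ even},i<t}d_i+c,0)$ if $z=0,t$ even. Construction of $\eta_k$: let $f_k(v)=kv_1+(1-k)v_2$ for $v\in\mathbb N^2$ (so $f_k((1,0))=k$, $f_k((n,n+1))=n+1-k$). Put $z_k=1$ if $k\leq n+1-k$ and $z_k=0$ otherwise, and $d_{k,0}=0$. Iteratively for $l\geq1$, with $O_l=\sum_{j\text{ odd},1\leq j\leq l-1}d_{k,j}$ and $E_l=\sum_{j\text{ even},0\leq j\leq l-1}d_{k,j}$, define $t_l=\max\{m\in\mathbb N: mk\leq(E_l+1)(n+1-k)\}$ if $z_k=1,l$ odd; $t_l=\max\{m: m(n+1-k)\leq(O_l+1)k\}$ if $z_k=1,l$ even; $t_l=\max\{m:m(n+1-k)\leq(E_l+1)k\}$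 if $z_k=0,l$ odd; $t_l=\max\{m:mk\leq(O_l+1)(n+1-k)\}$ if $z_k=0,l$ even; $s_1=0$, $s_l=O_l$ for odd $l>1$, $s_l=E_l$ for even $l$; and $d_{k,l}=\min\{n-\sum_{j=0}^{l-1}d_{k,j},\,t_l-s_l\}$. The process stops at the first $r$ with $\sum_{j=1}^rd_{k,j}=n$, and $\eta_k=(z_k,d_{k,0},\ldots,d_{k,r})$ (it lies in $\Omega$). *)

theory Defs
  imports Main
begin

text \<open>A sequence eta = (z, d_0, ..., d_r) is represented as a pair (z, ds) with
  z :: nat (in {0,1}) and ds = [d_0, ..., d_r] :: nat list.\<close>

definition Omega :: "nat \<Rightarrow> (nat \<times> nat list) set" where
  "Omega n = {(z, ds). z \<in> {0,1} \<and> ds \<noteq> [] \<and> ds ! 0 = 0 \<and>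
      (\<forall>i. 1 \<le> i \<and> i < length ds \<longrightarrow> ds ! i \<ge> 1) \<and> sum_list ds = n}"

definition psum :: "nat list \<Rightarrow> nat \<Rightarrow> nat" where
  "psum ds t = (\<Sum>i<t. ds ! i)"

definition odd_sum :: "nat list \<Rightarrow> nat \<Rightarrow> nat" where
  "odd_sum ds t = (\<Sum>i\<in>{i. i < t \<and> odd i}. ds ! i)"

definition even_sum :: "nat list \<Rightarrow> nat \<Rightarrow> nat" where
  "even_sum ds t = (\<Sum>i\<in>{i. i < t \<and> even i}. ds ! i)"

definition vvec :: "nat \<Rightarrow> nat \<times> nat list \<Rightarrow> nat \<times> nat" where
  "vvec j eta = (case eta of (z, ds) \<Rightarrow>
     (let t = (THE t. t < length ds \<and> psum ds t < j \<and> j \<le> psum ds (Suc t));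
          c = j - psum ds t
      in if z = 1 then
           (if odd t then (odd_sum ds t + c, 0) else (0, even_sum ds t + c))
         else
           (if odd t then (0, odd_sum ds t + c) else (even_sum ds t + c, 0))))"

text \<open>Construction of eta_k. The values are computed in the integers, exactly as
  written (min of n - partial sum and t_l - s_l).\<close>

definition z_k :: "nat \<Rightarrow> nat \<Rightarrow> nat" where
  "z_k n k = (if k \<le> n + 1 - k then 1 else 0)"

text \<open>Given prev = [d_{k,0}, ..., d_{k,l-1}] (length l \<ge> 1), compute d_{k,l}.\<close>
definition next_d :: "nat \<Rightarrow> nat \<Rightarrow> int list \<Rightarrow> int" where
  "next_d n k prev = (
     let l = length prev;
         Ol = (\<Sum>j\<in>{j. 1 \<le> j \<and> j \<le> l - 1 \<and> odd j}. prev ! j);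
         Ev = (\<Sum>j\<in>{j. j \<le> l - 1 \<and> even j}. prev ! j);
         a = int k; b = int n + 1 - int k;
         t = (if z_k n k = 1 then
                (if odd l then int (GREATEST m::nat. int m * a \<le> (Ev + 1) * b)
                 else int (GREATEST m::nat. int m * b \<le> (Ol + 1) * a))
              else
                (if odd l then int (GREATEST m::nat. int m * b \<le> (Ev + 1) * a)
                 else int (GREATEST m::nat. int m * a \<le> (Ol + 1) * b)));
         s = (if l = 1 then 0 else if odd l then Ol else Ev)
     in min (int n - sum_list prev) (t - s))"

fun dseq :: "nat \<Rightarrow> nat \<Rightarrow> nat \<Rightarrow> int list" where
  "dseq n k 0 = [0]"
| "dseq n k (Suc l) = dseq n k l @ [next_d n k (dseq n k l)]"

definition d_k :: "nat \<Rightarrow> nat \<Rightarrow> nat \<Rightarrow> int" where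
  "d_k n k l = dseq n k l ! l"

definition r_k :: "nat \<Rightarrow> nat \<Rightarrow> nat" where
  "r_k n k = (LEAST r. (\<Sum>j=1..r. d_k n k j) = int n)"

definition eta_k :: "nat \<Rightarrow> nat \<Rightarrow> nat \<times> nat list" where
  "eta_k n k = (z_k n k, map nat (dseq n k (r_k n k)))"

end

theory Submission
  imports Defs
begin

(* Write p <= q for the two numbers k and n + 1 - k, and O, E for the running sums of the
   odd- and even-indexed d_{k,j}.  The construction alternately raises O to
   floor((E + 1) q / p) and E to floor((O + 1) p / q), capped so that O + E <= n = p + q - 1.
   As long as O < q and E < p, the ratio (O + 1) : (E + 1) stays on alternating sides of
   q : p, so every step raises O or E by at least one.  The cap can only bind at the corner
   O = q, E = p - 1 (after an odd step) or E = p, O = q - 1 (after an even step); there the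
   sum reaches n, and v_{n,eta_k} is (O, 0) or (0, E) according to z_k and the parity of
   the last index, i.e. one of (0, k) and (n + 1 - k, 0). *)

lemma le_zdiv_iff_mult_le:
  fixes a b m :: int
  assumes "0 < b"
  shows "m \<le> a div b \<longleftrightarrow> m * b \<le> a"
proof
  assume "m \<le> a div b"
  then have "m * b \<le> a div b * b" using assms by (simp add: mult_right_mono)
  also have "\<dots> \<le> a" using div_mult_mod_eq [of a b] pos_mod_sign [OF assms, of a] by linarith
  finally show "m * b \<le> a" .
next
  assume "m * b \<le> a"
  then have "m * b div b \<le> a div b" using assms by (rule zdiv_mono1)
  then show "m \<le> a div b" using assms by simp
qed

lemma Greatest_mult_le_eq_div:
  fixes a b :: int
  assumes "0 < b" "0 \<le> a"
  shows "int (GREATEST m::nat. int m * b \<le> a) = a div b"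
proof -
  have "(GREATEST m::nat. int m * b \<le> a) = nat (a div b)"
    using assms
    by (intro Greatest_equality) (simp_all add: pos_imp_zdiv_nonneg_iff le_zdiv_iff_mult_le [symmetric])
  then show ?thesis using assms by (simp add: pos_imp_zdiv_nonneg_iff)
qed

(* x' is the coordinate raised by one step of the construction, capped at x' + y <= p + q - 1. *)
lemma floor_ratio_step:
  fixes p q x y :: int
  assumes "0 < p" "0 < q" "x < q" "y < p" "(x + 1) * p \<le> (y + 1) * q"
  defines "x' \<equiv> min (p + q - 1 - y) ((y + 1) * q div p)"
  shows "x < x'"
    and "x' < q \<and> (y + 1) * q \<le> (x' + 1) * p \<or> x' = q \<and> y = p - 1"
proof -
  define t where "t = (y + 1) * q div p"
  have "x + 1 \<le> t" using assms by (simp add: t_def le_zdiv_iff_mult_le)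
  then show "x < x'" using assms by (simp add: x'_def t_def)
  have "(y + 1) * q < (t + 1) * p"
    using assms by (simp add: t_def not_le [symmetric] le_zdiv_iff_mult_le [symmetric])
  have "(y + 1) * q \<le> q * p" using assms by simp
  then have "t \<le> q" using zdiv_mono1 [of _ _ p] assms by (fastforce simp: t_def)
  have "y = p - 1" if "t = q"
  proof -
    have "q * p \<le> (y + 1) * q"
      using that assms by (simp add: t_def le_zdiv_iff_mult_le [symmetric])
    then show ?thesis using assms by (simp add: mult.commute)
  qed
  show "x' < q \<and> (y + 1) * q \<le> (x' + 1) * p \<or> x' = q \<and> y = p - 1"
  proof (cases "t < p + q - 1 - y")
    case True
    then show ?thesis using \<open>t \<le> q\<close> \<open>t = q \<Longrightarrow> y = p - 1\<close> \<open>(y + 1) * q < (t + 1) * p\<close>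
      by (auto simp: x'_def t_def [symmetric])
  next
    case False
    then show ?thesis using \<open>t \<le> q\<close> \<open>t = q \<Longrightarrow> y = p - 1\<close> assms(4)
      by (auto simp: x'_def t_def [symmetric])
  qed
qed

(* For the sequence d = d_k n k, odd_part d l and even_part d l are the paper's O_{l+1} and E_{l+1}. *)
definition odd_part :: "(nat \<Rightarrow> 'a::comm_monoid_add) \<Rightarrow> nat \<Rightarrow> 'a" where
  "odd_part f l = (\<Sum>j\<in>{j. j \<le> l \<and> odd j}. f j)"

definition even_part :: "(nat \<Rightarrow> 'a::comm_monoid_add) \<Rightarrow> nat \<Rightarrow> 'a" where
  "even_part f l = (\<Sum>j\<in>{j. j \<le> l \<and> even j}. f j)"

lemma odd_part_0 [simp]: "odd_part f 0 = 0"
proof -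
  have "{j::nat. j \<le> 0 \<and> odd j} = {}" by (auto simp: odd_pos)
  then show ?thesis by (simp only: odd_part_def sum.empty)
qed

lemma even_part_0 [simp]: "even_part f 0 = f 0"
proof -
  have "{j::nat. j \<le> 0 \<and> even j} = {0}" by auto
  then show ?thesis by (simp add: even_part_def)
qed

lemma odd_part_Suc:
  "odd_part f (Suc l) = (if odd (Suc l) then odd_part f l + f (Suc l) else odd_part f l)"
proof -
  have "{j. j \<le> Suc l \<and> odd j} =
      (if odd (Suc l) then insert (Suc l) {j. j \<le> l \<and> odd j} else {j. j \<le> l \<and> odd j})"
    by (auto simp: le_Suc_eq)
  then show ?thesis by (simp add: odd_part_def add.commute)
qed

lemma even_part_Suc:
  "even_part f (Suc l) = (if even (Suc l) then even_part f l + f (Suc l) else even_part f l)"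
proof -
  have "{j. j \<le> Suc l \<and> even j} =
      (if even (Suc l) then insert (Suc l) {j. j \<le> l \<and> even j} else {j. j \<le> l \<and> even j})"
    by (auto simp: le_Suc_eq)
  then show ?thesis by (simp add: even_part_def add.commute)
qed

lemma odd_part_add_even_part_Suc:
  "odd_part f (Suc l) + even_part f (Suc l) = odd_part f l + even_part f l + f (Suc l)"
  by (simp add: odd_part_Suc even_part_Suc add_ac)

lemma odd_part_add_even_part: "odd_part f l + even_part f l = sum f {..l}"
proof (induction l)
  case (Suc l)
  then show ?case by (simp only: odd_part_add_even_part_Suc sum.atMost_Suc)
qed simp

lemma odd_part_cong: "(\<And>j. j \<le> l \<Longrightarrow> f j = g j) \<Longrightarrow> odd_part f l = odd_part g l"
  by (simp add: odd_part_def)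

lemma even_part_cong: "(\<And>j. j \<le> l \<Longrightarrow> f j = g j) \<Longrightarrow> even_part f l = even_part g l"
  by (simp add: even_part_def)

lemma of_nat_odd_part: "of_nat (odd_part f l) = odd_part (\<lambda>j. of_nat (f j)) l"
  by (simp add: odd_part_def)

lemma of_nat_even_part: "of_nat (even_part f l) = even_part (\<lambda>j. of_nat (f j)) l"
  by (simp add: even_part_def)

lemma odd_sum_add_nth: "odd t \<Longrightarrow> odd_sum ds t + ds ! t = odd_part (nth ds) t"
proof -
  assume "odd t"
  then have "{j. j \<le> t \<and> odd j} = insert t {j. j < t \<and> odd j}" by auto
  then show ?thesis by (simp add: odd_part_def odd_sum_def add.commute)
qed

lemma even_sum_add_nth: "even t \<Longrightarrow> even_sum ds t + ds ! t = even_part (nth ds) t"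
proof -
  assume "even t"
  then have "{j. j \<le> t \<and> even j} = insert t {j. j < t \<and> even j}" by auto
  then show ?thesis by (simp add: even_part_def even_sum_def add.commute)
qed

lemma psum_Suc: "psum ds (Suc t) = psum ds t + ds ! t"
  by (simp add: psum_def)

lemma psum_mono: "t \<le> t' \<Longrightarrow> psum ds t \<le> psum ds t'"
  unfolding psum_def by (rule sum_mono2) auto

lemma psum_length: "psum ds (length ds) = sum_list ds"
  by (simp add: psum_def sum_list_sum_nth atLeast0LessThan)

lemma vvec_sum_list:
  assumes "ds \<noteq> []" and "0 < last ds"
  defines "r \<equiv> length ds - 1"
  shows "vvec (sum_list ds) (z, ds) =
    (if z = 1 then (if odd r then (odd_part (nth ds) r, 0) else (0, even_part (nth ds) r))
     else (if odd r then (0, odd_part (nth ds) r) else (even_part (nth ds) r, 0)))"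
proof -
  have len: "length ds = Suc r" using assms(1) by (simp add: r_def)
  have last: "last ds = ds ! r" using assms(1) by (simp add: last_conv_nth r_def)
  have total: "psum ds (Suc r) = sum_list ds" using psum_length [of ds] len by simp
  have "(THE t. t < length ds \<and> psum ds t < sum_list ds \<and> sum_list ds \<le> psum ds (Suc t)) = r"
  proof (rule the_equality)
    show "r < length ds \<and> psum ds r < sum_list ds \<and> sum_list ds \<le> psum ds (Suc r)"
      using len total assms(2) by (simp add: last psum_Suc)
  next
    fix t assume t: "t < length ds \<and> psum ds t < sum_list ds \<and> sum_list ds \<le> psum ds (Suc t)"
    have "psum ds (Suc t) \<le> psum ds r" if "t < r" using that by (simp add: psum_mono)
    then show "t = r" using t len total assms(2) by (fastforce simp: last psum_Suc)
  qed
  moreover have "sum_list ds - psum ds r = ds ! r" using total by (simp add: psum_Suc)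
  ultimately show ?thesis
    by (simp add: vvec_def Let_def odd_sum_add_nth even_sum_add_nth)
qed

lemma length_dseq: "length (dseq n k l) = Suc l"
  by (induction l) simp_all

lemma dseq_eq_map: "dseq n k l = map (d_k n k) [0..<Suc l]"
proof (induction l)
  case 0
  then show ?case by (simp add: d_k_def)
next
  case (Suc l)
  then show ?case by (simp add: d_k_def nth_append length_dseq)
qed

lemma d_k_0 [simp]: "d_k n k 0 = 0"
  by (simp add: d_k_def)

lemma d_k_Suc: "d_k n k (Suc l) = next_d n k (map (d_k n k) [0..<Suc l])"
proof -
  have "d_k n k (Suc l) = next_d n k (dseq n k l)"
    by (simp add: d_k_def nth_append length_dseq)
  then show ?thesis by (simp only: dseq_eq_map)
qed

locale eta_construction =
  fixes n k :: nat
  assumes k_pos: "1 \<le> k" and k_le_n: "k \<le> n"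
begin

abbreviation d :: "nat \<Rightarrow> int" where
  "d \<equiv> d_k n k"

definition p :: int where
  "p = int (min k (n + 1 - k))"

definition q :: int where
  "q = int (max k (n + 1 - k))"

lemma p_pos: "0 < p"
  using k_pos k_le_n by (simp add: p_def)

lemma p_le_q: "p \<le> q"
  by (simp add: p_def q_def)

lemma p_add_q: "p + q = int n + 1"
  using k_le_n by (simp add: p_def q_def)

lemma z_k_cases:
  "z_k n k = 1 \<and> p = int k \<and> q = int n + 1 - int k \<or>
   z_k n k = 0 \<and> p = int n + 1 - int k \<and> q = int k"
  using k_le_n by (auto simp: z_k_def p_def q_def)

lemma d_Suc:
  assumes "0 \<le> odd_part d l" and "0 \<le> even_part d l"
  shows "d (Suc l) = min (int n - (odd_part d l + even_part d l))
    (if even l then (even_part d l + 1) * q div p - odd_part d l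
     else (odd_part d l + 1) * p div q - even_part d l)"
proof -
  define prev where "prev = map d [0..<Suc l]"
  have nth_prev: "prev ! j = d j" if "j \<le> l" for j
    using that by (simp add: prev_def nth_map_upt del: upt_Suc)
  have "{j. 1 \<le> j \<and> j \<le> l \<and> odd j} = {j. j \<le> l \<and> odd j}"
    by (auto simp: odd_pos Suc_le_eq)
  then have odds: "(\<Sum>j\<in>{j. 1 \<le> j \<and> j \<le> l \<and> odd j}. prev ! j) = odd_part d l"
    by (simp add: odd_part_def nth_prev)
  have evens: "(\<Sum>j\<in>{j. j \<le> l \<and> even j}. prev ! j) = even_part d l"
    by (simp add: even_part_def nth_prev)
  have "sum_list prev = sum d {..l}"
    by (simp add: prev_def sum_list_sum_nth atLeast0LessThan lessThan_Suc_atMost del: upt_Suc)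
  then have total: "sum_list prev = odd_part d l + even_part d l"
    by (simp add: odd_part_add_even_part)
  have len: "length prev = Suc l" by (simp add: prev_def)
  have "0 < q" using p_pos p_le_q by simp
  have "d (Suc l) = next_d n k prev" by (simp add: d_k_Suc prev_def)
  also have "\<dots> = min (int n - (odd_part d l + even_part d l))
    (if even l then (even_part d l + 1) * q div p - odd_part d l
     else (odd_part d l + 1) * p div q - even_part d l)"
    unfolding next_d_def Let_def len diff_Suc_1 odds evens total
    using z_k_cases p_pos \<open>0 < q\<close> assms by (auto simp: Greatest_mult_le_eq_div)
  finally show ?thesis .
qed

definition balanced :: "nat \<Rightarrow> bool" where
  "balanced l \<longleftrightarrow>
    0 \<le> odd_part d l \<and> odd_part d l < q \<and> 0 \<le> even_part d l \<and> even_part d l < p \<and>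
    (if even l then (odd_part d l + 1) * p \<le> (even_part d l + 1) * q
     else (even_part d l + 1) * q \<le> (odd_part d l + 1) * p)"

definition terminal :: "nat \<Rightarrow> bool" where
  "terminal r \<longleftrightarrow> odd_part d r + even_part d r = int n \<and>
    (if odd r then odd_part d r = q else even_part d r = p)"

lemma balanced_0: "balanced 0"
  using p_pos p_le_q by (simp add: balanced_def)

lemma balanced_sum_less: "balanced l \<Longrightarrow> odd_part d l + even_part d l < int n"
  using p_add_q by (simp add: balanced_def)

lemma balanced_Suc:
  assumes "balanced l"
  shows "0 < d (Suc l)" and "balanced (Suc l) \<or> terminal (Suc l)"
proof -
  define x y where "x = odd_part d l" and "y = even_part d l"
  have "0 < q" using p_pos p_le_q by simp
  have bal: "0 \<le> x" "x < q" "0 \<le> y" "y < p"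
    "if even l then (x + 1) * p \<le> (y + 1) * q else (y + 1) * q \<le> (x + 1) * p"
    using assms by (simp_all add: balanced_def x_def y_def)
  have n_eq: "int n = p + q - 1" using p_add_q by simp
  have "0 < d (Suc l) \<and> (balanced (Suc l) \<or> terminal (Suc l))"
  proof (cases "even l")
    case True
    define x' where "x' = min (p + q - 1 - y) ((y + 1) * q div p)"
    have parts: "odd_part d (Suc l) = x'" "even_part d (Suc l) = y"
      "d (Suc l) = x' - x"
      using True d_Suc [of l] bal n_eq
      by (simp_all add: odd_part_Suc even_part_Suc x_def y_def x'_def)
    from floor_ratio_step [of p q x y] True bal p_pos \<open>0 < q\<close>
    have "x < x'" "x' < q \<and> (y + 1) * q \<le> (x' + 1) * p \<or> x' = q \<and> y = p - 1"
      by (simp_all add: x'_def)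
    then show ?thesis
      using True bal n_eq by (auto simp: balanced_def terminal_def parts)
  next
    case False
    define y' where "y' = min (q + p - 1 - x) ((x + 1) * p div q)"
    have parts: "odd_part d (Suc l) = x" "even_part d (Suc l) = y'"
      "d (Suc l) = y' - y"
      using False d_Suc [of l] bal n_eq
      by (simp_all add: odd_part_Suc even_part_Suc x_def y_def y'_def)
    from floor_ratio_step [of q p y x] False bal p_pos \<open>0 < q\<close>
    have "y < y'" "y' < p \<and> (x + 1) * p \<le> (y' + 1) * q \<or> y' = p \<and> x = q - 1"
      by (simp_all add: y'_def)
    then show ?thesis
      using False bal n_eq by (auto simp: balanced_def terminal_def parts)
  qed
  then show "0 < d (Suc l)" and "balanced (Suc l) \<or> terminal (Suc l)" by blast+
qed

lemma terminal_exists: "\<exists>r. terminal r \<and> (\<forall>l<r. balanced l)"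
proof -
  have "(\<forall>l\<le>m. balanced l) \<and> int m \<le> odd_part d m + even_part d m \<or>
      (\<exists>r. terminal r \<and> (\<forall>l<r. balanced l))" for m
  proof (induction m)
    case 0
    then show ?case using balanced_0 by simp
  next
    case (Suc m)
    show ?case
    proof (cases "\<exists>r. terminal r \<and> (\<forall>l<r. balanced l)")
      case False
      with Suc.IH have all: "\<forall>l\<le>m. balanced l" and "int m \<le> odd_part d m + even_part d m"
        by blast+
      then have sum: "int (Suc m) \<le> odd_part d (Suc m) + even_part d (Suc m)"
        using balanced_Suc(1) [of m] odd_part_add_even_part_Suc [of d m] by simp
      have "balanced (Suc m) \<or> terminal (Suc m)"
        using all balanced_Suc(2) [of m] by simp
      then show ?thesis
      proof
        assume "balanced (Suc m)"
        then have "\<forall>l\<le>Suc m. balanced l" using all by (simp add: le_Suc_eq)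
        then show ?thesis using sum by blast
      next
        assume "terminal (Suc m)"
        then have "terminal (Suc m) \<and> (\<forall>l<Suc m. balanced l)"
          using all by (simp add: less_Suc_eq_le)
        then show ?thesis by blast
      qed
    qed blast
  qed
  moreover have "\<not> ((\<forall>l\<le>n. balanced l) \<and> int n \<le> odd_part d n + even_part d n)"
    using balanced_sum_less [of n] by auto
  ultimately show ?thesis by blast
qed

lemma terminal_pos: "terminal r \<Longrightarrow> 0 < r"
  using k_pos k_le_n by (cases r) (simp_all add: terminal_def)

lemma sum_d_eq_odd_part_add_even_part: "(\<Sum>j = 1..l. d j) = odd_part d l + even_part d l"
  by (induction l) (simp_all add: odd_part_add_even_part_Suc)

lemma r_k_eq:
  assumes "terminal r" and "\<forall>l<r. balanced l"
  shows "r_k n k = r"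
  unfolding r_k_def
proof (rule Least_equality)
  show "(\<Sum>j = 1..r. d j) = int n"
    using assms(1) unfolding sum_d_eq_odd_part_add_even_part terminal_def by simp
next
  fix y assume "(\<Sum>j = 1..y. d j) = int n"
  then show "r \<le> y"
    using assms(2) balanced_sum_less [of y] unfolding sum_d_eq_odd_part_add_even_part
    by (auto simp: not_le [symmetric])
qed

lemma vvec_eta_k:
  assumes "terminal r" and "\<forall>l<r. balanced l"
  shows "vvec n (eta_k n k) =
    (if z_k n k = 1 then (if odd r then (nat q, 0) else (0, nat p))
     else (if odd r then (0, nat q) else (nat p, 0)))"
proof -
  have d_pos: "0 < d j" if "1 \<le> j" "j \<le> r" for j
    using that assms(2) balanced_Suc(1) [of "j - 1"] by simp
  define ds where "ds = map (nat \<circ> d) [0..<Suc r]"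
  have nth_ds: "int (ds ! j) = d j" if "j \<le> r" for j
    using that d_pos [of j] by (cases "j = 0") (simp_all add: ds_def nth_map_upt del: upt_Suc)
  have len: "length ds = Suc r" by (simp add: ds_def)
  have "0 < ds ! r"
    using nth_ds [of r] d_pos [of r] terminal_pos [OF assms(1)] by simp
  moreover have nonempty: "ds \<noteq> []" using len by auto
  ultimately have last: "0 < last ds" using len by (simp add: last_conv_nth)
  have odd: "int (odd_part (nth ds) r) = odd_part d r"
    by (simp add: of_nat_odd_part nth_ds cong: odd_part_cong)
  have even: "int (even_part (nth ds) r) = even_part d r"
    by (simp add: of_nat_even_part nth_ds cong: even_part_cong)
  have "sum_list ds = odd_part (nth ds) r + even_part (nth ds) r"
    using len by (simp add: sum_list_sum_nth atLeast0LessThan lessThan_Suc_atMost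
        odd_part_add_even_part)
  then have total: "sum_list ds = n"
    using odd even assms(1) by (simp add: terminal_def)
  have "eta_k n k = (z_k n k, ds)"
    by (simp add: eta_k_def r_k_eq [OF assms] dseq_eq_map ds_def)
  then have "vvec n (eta_k n k) = vvec (sum_list ds) (z_k n k, ds)"
    by (simp add: total)
  also have "\<dots> = (if z_k n k = 1
      then (if odd r then (odd_part (nth ds) r, 0) else (0, even_part (nth ds) r))
      else (if odd r then (0, odd_part (nth ds) r) else (even_part (nth ds) r, 0)))"
    using vvec_sum_list [OF nonempty last] len by simp
  finally show ?thesis
    using odd even assms(1) by (auto simp: terminal_def)
qed

end

theorem proposition3p8:
  fixes n k :: nat
  assumes "1 \<le> n" and "1 \<le> k" and "k \<le> n"
  shows "vvec n (eta_k n k) = (0, k) \<or> vvec n (eta_k n k) = (n - k + 1, 0)"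
proof -
  interpret eta_construction n k
    using assms by unfold_locales
  obtain r where "terminal r" and "\<forall>l<r. balanced l"
    using terminal_exists by blast
  then show ?thesis
    using vvec_eta_k z_k_cases assms by auto
qed

end
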